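(* Let $G$ be a graph and let $v_1,\dots,v_6$ be pairwise distinct vertices of $G$ such that $v_2v_3,v_4v_5,v_6v_1$ are edges and $v_1v_2,v_3v_4,v_5v_6$ are non-edges of $G$ (an $AP_6$). Assume that no two of the edges $v_2v_3,v_4v_5,v_6v_1$ are in conflict. Then $v_3v_6,v_4v_1,v_5v_2$ are edges of $G$, and $v_4v_5$ is in conflict with $v_3v_6$, $v_2v_3$ is in conflict with $v_4v_1$, and $v_6v_1$ is in conflict with $v_5v_2$.
   Context: Two edges $e,e'$ of a graph are in conflict if there are vertices $w_1,w_2,w_3,w_4$ (not necessarily distinct) with $e=w_2w_3$, $e'=w_4w_1$ and $w_1w_2$, $w_3w_4$ non-edges (i.e. the four vertices build an alternating cycle $AC_4$). *)

theory Defs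
  imports Main
begin

definition simple_graph :: "('a \<Rightarrow> 'a \<Rightarrow> bool) \<Rightarrow> bool" where
  "simple_graph E \<longleftrightarrow> (\<forall>u v. E u v \<longrightarrow> E v u) \<and> (\<forall>v. \<not> E v v)"

text \<open>The (unordered) edges ab and cd are in conflict if there are vertices
w1..w4 (not necessarily distinct) with ab = w2w3, cd = w4w1 and w1w2, w3w4
non-edges.\<close>

definition in_conflict :: "('a \<Rightarrow> 'a \<Rightarrow> bool) \<Rightarrow> 'a \<times> 'a \<Rightarrow> 'a \<times> 'a \<Rightarrow> bool" where
  "in_conflict E e e' \<longleftrightarrow>
     (\<exists>w1 w2 w3 w4. {w2, w3} = {fst e, snd e} \<and> {w4, w1} = {fst e', snd e'}
        \<and> \<not> E w1 w2 \<and> \<not> E w3 w4)"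

end

theory Submission
  imports Defs
begin

text \<open>Each of the three non-conflicts, applied to a non-edge of the alternating path, forces
a chord of the hexagon; each chord then closes an alternating 4-cycle with two path edges,
giving the three conflicts.\<close>

lemma simple_graph_sym: "simple_graph E \<Longrightarrow> E u v \<Longrightarrow> E v u"
  unfolding simple_graph_def by blast

lemma in_conflict_swap_fst: "in_conflict E (a, b) e' \<longleftrightarrow> in_conflict E (b, a) e'"
  unfolding in_conflict_def by (auto simp: insert_commute)

lemma in_conflict_swap_snd: "in_conflict E e (c, d) \<longleftrightarrow> in_conflict E e (d, c)"
  unfolding in_conflict_def by (auto simp: insert_commute)

lemma in_conflictI: "\<not> E w1 w2 \<Longrightarrow> \<not> E w3 w4 \<Longrightarrow> in_conflict E (w2, w3) (w4, w1)"
  unfolding in_conflict_def by auto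

lemma not_in_conflict_edge:
  assumes "\<not> in_conflict E (a, b) (c, d)" and "\<not> E b c"
  shows "E d a"
  using assms in_conflictI[of E d a b c] by blast

theorem lemma2:
  fixes E :: "'a \<Rightarrow> 'a \<Rightarrow> bool" and v1 v2 v3 v4 v5 v6 :: 'a
  assumes "simple_graph E"
    and "distinct [v1, v2, v3, v4, v5, v6]"
    and "E v2 v3" and "E v4 v5" and "E v6 v1"
    and "\<not> E v1 v2" and "\<not> E v3 v4" and "\<not> E v5 v6"
    and "\<not> in_conflict E (v2, v3) (v4, v5)"
    and "\<not> in_conflict E (v2, v3) (v6, v1)"
    and "\<not> in_conflict E (v4, v5) (v6, v1)"
  shows "E v3 v6 \<and> E v4 v1 \<and> E v5 v2 \<and>
         in_conflict E (v4, v5) (v3, v6) \<and>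
         in_conflict E (v2, v3) (v4, v1) \<and>
         in_conflict E (v6, v1) (v5, v2)"
proof -
  note sym = simple_graph_sym[OF assms(1)]
  have "\<not> E v2 v1" "\<not> E v4 v3" "\<not> E v6 v5"
    using assms(6-8) sym by blast+
  note non_edges = this assms(6-8)
  have "E v5 v2"
    using not_in_conflict_edge[OF assms(9)] assms(7) .
  moreover have "E v1 v4"
    using not_in_conflict_edge[OF assms(11)] assms(8) .
  moreover have "E v6 v3"
  proof -
    have "\<not> in_conflict E (v3, v2) (v1, v6)"
      using assms(10) by (simp add: in_conflict_swap_fst in_conflict_swap_snd)
    from not_in_conflict_edge[OF this non_edges(1)] show ?thesis .
  qed
  moreover have "in_conflict E (v4, v5) (v3, v6)"
    using in_conflictI[of E v6 v5 v4 v3] non_edges by (simp add: in_conflict_swap_fst)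
  moreover have "in_conflict E (v2, v3) (v4, v1)"
    using in_conflictI[of E v1 v2 v3 v4] non_edges by simp
  moreover have "in_conflict E (v6, v1) (v5, v2)"
    using in_conflictI[of E v2 v1 v6 v5] non_edges
    by (simp add: in_conflict_swap_fst in_conflict_swap_snd)
  ultimately show ?thesis
    using sym by blast
qed

end
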